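(* Let $\mathbf x\in\mathcal D^m$ and $\mathbf q_n(t)=\sum_{i:\,t^n_i\le t}(\mathbf{x}(t^n_{i+1})-\mathbf{x}(t^n_i))(\mathbf{x}(t^n_{i+1})-\mathbf{x}(t^n_i))^T$. Then $(\mathbf q_n)$ converges in $(\mathcal D^{m\times m},d)$ if and only if it converges in the product space $(\mathcal D,d)^{m\times m}$ (i.e. each entry converges in $(\mathcal D,d)$).
   Context: Let $\pi=(\pi_n)_{n\ge1}$ be a sequence of partitions $\pi_n=(t^n_0,\dots,t^n_{k_n})$ with $0=t^n_0<\dots<t^n_{k_n}<\infty$, $t^n_{k_n}\uparrow\infty$, and mesh tending to $0$ on compacts; sums over $i$ run over $0\le i<k_n$. $\mathcal{D}$, $\mathcal{D}^m$, $\mathcal{D}^{m\times m}$ denote the spaces of càdlàg functions $[0,\infty)\to\mathbb{R}$, $\mathbb R^m$, $\mathbb{R}^{m\times m}$, each with a metric $d$ inducing its Skorokhod $J_1$ topology. *)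

theory Defs
  imports "HOL-Analysis.Analysis"
begin

text \<open>Cadlag functions on [0,\<infinity>) (values at negative times are irrelevant).\<close>
definition cadlag :: "(real \<Rightarrow> 'a::metric_space) \<Rightarrow> bool" where
  "cadlag f \<longleftrightarrow> (\<forall>s\<ge>0. continuous (at_right s) f) \<and>
                 (\<forall>s>0. \<exists>l. (f \<longlongrightarrow> l) (at_left s))"

definition time_changes :: "(real \<Rightarrow> real) set" where
  "time_changes = {lam. continuous_on {0..} lam \<and> strict_mono_on {0..} lam \<and> lam ` {0..} = {0..}}"

text \<open>Convergence in the Skorokhod J1 topology on D([0,\<infinity>)), via the standard sequential
  characterisation (Ethier--Kurtz, Prop. 3.5.3).\<close>
definition skorokhod_tendsto :: "(nat \<Rightarrow> real \<Rightarrow> 'a::metric_space) \<Rightarrow> (real \<Rightarrow> 'a) \<Rightarrow> bool" where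
  "skorokhod_tendsto xs x \<longleftrightarrow> (\<forall>n. cadlag (xs n)) \<and> cadlag x \<and>
     (\<exists>lam. (\<forall>n. lam n \<in> time_changes) \<and>
        (\<forall>T>0. \<forall>e>0. eventually (\<lambda>n. \<forall>s\<in>{0..T}. \<bar>lam n s - s\<bar> \<le> e) sequentially) \<and>
        (\<forall>T>0. \<forall>e>0. eventually (\<lambda>n. \<forall>s\<in>{0..T}. dist (xs n (lam n s)) (x s) \<le> e) sequentially))"

definition skorokhod_convergent :: "(nat \<Rightarrow> real \<Rightarrow> 'a::metric_space) \<Rightarrow> bool" where
  "skorokhod_convergent xs \<longleftrightarrow> (\<exists>x. skorokhod_tendsto xs x)"

text \<open>Partition sequence: t n i = t^n_i, k n = k_n.\<close>
definition partition_seq :: "(nat \<Rightarrow> nat \<Rightarrow> real) \<Rightarrow> (nat \<Rightarrow> nat) \<Rightarrow> bool" where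
  "partition_seq t k \<longleftrightarrow>
     (\<forall>n. t n 0 = 0) \<and> (\<forall>n i. i < k n \<longrightarrow> t n i < t n (Suc i)) \<and>
     mono (\<lambda>n. t n (k n)) \<and> filterlim (\<lambda>n. t n (k n)) at_top sequentially \<and>
     (\<forall>T. (\<lambda>n. Max ({t n (Suc i) - t n i | i. i < k n \<and> t n i \<le> T} \<union> {0})) \<longlonglongrightarrow> 0)"

definition qv_matrix :: "(nat \<Rightarrow> nat \<Rightarrow> real) \<Rightarrow> (nat \<Rightarrow> nat) \<Rightarrow> (real \<Rightarrow> real^'m)
     \<Rightarrow> nat \<Rightarrow> real \<Rightarrow> real^'m^'m" where
  "qv_matrix t k x n s = (\<Sum>i\<in>{i. i < k n \<and> t n i \<le> s}.
      (\<chi> a b. (x (t n (Suc i)) - x (t n i)) $ a * (x (t n (Suc i)) - x (t n i)) $ b))"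

end

theory Submission
  imports Defs
begin

text \<open>Entrywise convergence only provides a separate sequence of time changes \<open>\<mu> a b\<close> for
  each entry; the point is that they can be replaced by a single one.  A jump larger than
  \<open>\<epsilon>\<close> of the limit \<open>F a b\<close> at \<open>v\<close> forces a step of the discrete quadratic variation at
  \<open>\<mu> a b n v\<close>, i.e. a large increment of \<open>x\<close> over a partition interval starting there.
  Since \<open>x\<close> is cadlag and the mesh tends to zero, for large \<open>n\<close> this is the partition
  interval containing \<open>v\<close>.  Hence all \<open>\<mu> a b n\<close> agree on the finitely many big jumps of all
  entries, and one time change close to the identity that takes these common values works
  for every entry, because between big jumps the limits oscillate little.  The converse is
  immediate, as the distance of matrices dominates that of their entries.\<close>

section \<open>Time changes\<close>

lemma time_change_less:
  "lam \<in> time_changes \<Longrightarrow> 0 \<le> s \<Longrightarrow> s < s' \<Longrightarrow> lam s < lam s'"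
  unfolding time_changes_def strict_mono_on_def by auto

lemma time_change_le:
  "lam \<in> time_changes \<Longrightarrow> 0 \<le> s \<Longrightarrow> s \<le> s' \<Longrightarrow> lam s \<le> lam s'"
  using time_change_less[of lam s s'] by (cases "s = s'") auto

lemma time_change_less_iff:
  "lam \<in> time_changes \<Longrightarrow> 0 \<le> s \<Longrightarrow> 0 \<le> s' \<Longrightarrow> lam s < lam s' \<longleftrightarrow> s < s'"
  using time_change_less[of lam s s'] time_change_le[of lam s' s] by (meson not_le)

lemma time_change_nonneg: "lam \<in> time_changes \<Longrightarrow> 0 \<le> s \<Longrightarrow> 0 \<le> lam s"
  unfolding time_changes_def by auto

lemma time_change_surj:
  assumes "lam \<in> time_changes" "0 \<le> y"
  obtains s where "0 \<le> s" "lam s = y"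
proof -
  have "y \<in> lam ` {0..}"
    using assms unfolding time_changes_def by auto
  then show ?thesis
    using that by auto
qed

lemma time_change_id: "(\<lambda>s. s) \<in> time_changes"
  unfolding time_changes_def by (auto simp: strict_mono_on_def)

lemma time_change_comp:
  assumes f: "f \<in> time_changes" and g: "g \<in> time_changes"
  shows "(\<lambda>s. f (g s)) \<in> time_changes"
proof -
  have "continuous_on {0..} (f \<circ> g)"
    using assms unfolding time_changes_def by (intro continuous_on_compose) auto
  moreover have "strict_mono_on {0..} (\<lambda>s. f (g s))"
    by (rule strict_mono_onI)
      (use f g time_change_less time_change_nonneg in \<open>auto simp del: atLeast_iff\<close>)
  moreover have "(\<lambda>s. f (g s)) ` {0..} = {0..}"
    using assms unfolding time_changes_def by (simp add: image_image[symmetric])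
  ultimately show ?thesis
    unfolding time_changes_def by (simp add: o_def)
qed

lemma time_change_isCont:
  assumes "lam \<in> time_changes" "0 < v"
  shows "isCont lam v"
proof -
  have "continuous_on {0<..} lam"
    using assms(1) unfolding time_changes_def by (auto intro: continuous_on_subset)
  then show ?thesis
    using assms(2) by (simp add: continuous_on_eq_continuous_at)
qed

lemma tendsto_time_change_at:
  fixes \<mu> :: "nat \<Rightarrow> real \<Rightarrow> real"
  assumes "\<And>e. e > 0 \<Longrightarrow> eventually (\<lambda>n. \<forall>s\<in>{0..T}. \<bar>\<mu> n s - s\<bar> \<le> e) sequentially"
    and "v \<in> {0..T}"
  shows "(\<lambda>n. \<mu> n v) \<longlonglongrightarrow> v"
  unfolding tendsto_iff
proof (intro allI impI)
  fix e :: real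
  assume "e > 0"
  then have "eventually (\<lambda>n. \<forall>s\<in>{0..T}. \<bar>\<mu> n s - s\<bar> \<le> e / 2) sequentially"
    using assms(1)[of "e / 2"] by simp
  then show "eventually (\<lambda>n. dist (\<mu> n v) v < e) sequentially"
    by (rule eventually_mono) (use assms(2) \<open>e > 0\<close> in \<open>force simp: dist_real_def\<close>)
qed

section \<open>Time changes through prescribed points\<close>

definition bump_time :: "real \<Rightarrow> real \<Rightarrow> real \<Rightarrow> real \<Rightarrow> real" where
  "bump_time v w c s = s + c * max 0 (1 - \<bar>s - v\<bar> / w)"

lemma bump_time_outside: "w > 0 \<Longrightarrow> w \<le> \<bar>s - v\<bar> \<Longrightarrow> bump_time v w c s = s"
  unfolding bump_time_def by (auto simp: field_simps)

lemma bump_time_center: "bump_time v w c v = v + c"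
  unfolding bump_time_def by simp

lemma bump_time_displacement:
  assumes "w > 0"
  shows "\<bar>bump_time v w c s - s\<bar> \<le> \<bar>c\<bar>"
proof -
  have "max 0 (1 - \<bar>s - v\<bar> / w) \<le> 1"
    using assms by simp
  then show ?thesis
    unfolding bump_time_def by (simp add: abs_mult mult_left_le)
qed

lemma bump_time_strict_mono:
  assumes w: "w > 0" and c: "\<bar>c\<bar> < w" and "s < s'"
  shows "bump_time v w c s < bump_time v w c s'"
proof -
  let ?tent = "\<lambda>s. max 0 (1 - \<bar>s - v\<bar> / w)"
  have "\<bar>(1 - \<bar>s' - v\<bar> / w) - (1 - \<bar>s - v\<bar> / w)\<bar> = \<bar>\<bar>s - v\<bar> - \<bar>s' - v\<bar>\<bar> / w"
    using w by (simp add: diff_divide_distrib[symmetric])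
  also have "\<dots> \<le> \<bar>s' - s\<bar> / w"
    using w by (intro divide_right_mono) auto
  finally have "\<bar>?tent s' - ?tent s\<bar> \<le> \<bar>s' - s\<bar> / w"
    by (auto simp: max_def)
  then have "\<bar>c * (?tent s' - ?tent s)\<bar> \<le> \<bar>c\<bar> * (\<bar>s' - s\<bar> / w)"
    unfolding abs_mult by (intro mult_left_mono) auto
  also have "\<dots> < w * (\<bar>s' - s\<bar> / w)"
    using c \<open>s < s'\<close> by (intro mult_strict_right_mono) (auto simp: w)
  also have "\<dots> = s' - s"
    using w \<open>s < s'\<close> by auto
  finally show ?thesis
    unfolding bump_time_def by (simp add: algebra_simps abs_less_iff)
qed

lemma bump_time_in_time_changes:
  assumes w: "w > 0" "w \<le> v" and c: "\<bar>c\<bar> < w"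
  shows "bump_time v w c \<in> time_changes"
proof -
  let ?h = "bump_time v w c"
  have cont: "continuous_on UNIV ?h"
    unfolding bump_time_def by (intro continuous_intros) (use w in auto)
  have mono: "strict_mono_on {0..} ?h"
    using bump_time_strict_mono[OF w(1) c] by (auto simp: strict_mono_on_def)
  have h0: "?h 0 = 0"
    using w by (intro bump_time_outside) auto
  have "0 \<le> ?h s" if "0 \<le> s" for s
    using h0 bump_time_strict_mono[OF w(1) c, of 0 s v] that by (cases "s = 0") auto
  then have "?h ` {0..} \<subseteq> {0..}"
    by auto
  moreover have "y \<in> ?h ` {0..}" if "0 \<le> y" for y
  proof -
    let ?b = "max y (v + w)"
    have "?h ?b = ?b"
      using w by (intro bump_time_outside) auto
    then have "\<exists>s\<ge>0. s \<le> ?b \<and> ?h s = y"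
      using h0 that cont by (intro IVT) (auto intro: continuous_on_subset simp: continuous_on_eq_continuous_at)
    then show ?thesis
      by auto
  qed
  ultimately have "?h ` {0..} = {0..}"
    by auto
  with cont mono show ?thesis
    unfolding time_changes_def by (auto intro: continuous_on_subset)
qed

text \<open>Composing one bump per point; the bumps have disjoint supports, so each one fixes the
  points already moved by the others.\<close>
lemma time_change_through_points:
  assumes "finite V" "w > 0" "\<forall>v\<in>V. w < v"
    and "\<forall>v\<in>V. \<forall>v'\<in>V. v \<noteq> v' \<longrightarrow> 2 * w \<le> \<bar>v - v'\<bar>"
    and "\<forall>v\<in>V. \<bar>p v - v\<bar> < w"
  shows "\<exists>lam\<in>time_changes. (\<forall>v\<in>V. lam v = p v) \<and>
           (\<forall>s. \<bar>lam s - s\<bar> \<le> (\<Sum>v\<in>V. \<bar>p v - v\<bar>)) \<and>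
           (\<forall>s. (\<forall>v\<in>V. w \<le> \<bar>s - v\<bar>) \<longrightarrow> lam s = s)"
  using assms
proof (induction V rule: finite_induct)
  case empty
  then show ?case
    using time_change_id by auto
next
  case (insert v V)
  then obtain lam where lam: "lam \<in> time_changes" "\<forall>u\<in>V. lam u = p u"
    "\<forall>s. \<bar>lam s - s\<bar> \<le> (\<Sum>u\<in>V. \<bar>p u - u\<bar>)"
    "\<forall>s. (\<forall>u\<in>V. w \<le> \<bar>s - u\<bar>) \<longrightarrow> lam s = s"
    by auto
  let ?h = "bump_time v w (p v - v)"
  have sep: "2 * w \<le> \<bar>v - u\<bar>" if "u \<in> V" for u
    using insert.prems(3) insert.hyps(2) that by force
  have "(\<lambda>s. ?h (lam s)) \<in> time_changes"
    using insert.prems(1,2,4) by (intro time_change_comp[OF bump_time_in_time_changes lam(1)]) auto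
  moreover have "?h (lam v) = p v"
  proof -
    have "lam v = v"
      using lam(4) sep insert.prems(1) by force
    then show ?thesis
      by (simp add: bump_time_center)
  qed
  moreover have "?h (lam u) = p u" if "u \<in> V" for u
  proof -
    have "\<bar>p u - u\<bar> < w"
      using insert.prems(4) that by simp
    then have "w \<le> \<bar>p u - v\<bar>"
      using sep[OF that] by linarith
    then show ?thesis
      using lam(2) that bump_time_outside insert.prems(1) by simp
  qed
  moreover have "\<bar>?h (lam s) - s\<bar> \<le> (\<Sum>u\<in>insert v V. \<bar>p u - u\<bar>)" for s
  proof -
    have "\<bar>?h (lam s) - s\<bar> \<le> \<bar>?h (lam s) - lam s\<bar> + \<bar>lam s - s\<bar>"
      by linarith
    also have "\<dots> \<le> \<bar>p v - v\<bar> + (\<Sum>u\<in>V. \<bar>p u - u\<bar>)"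
      using bump_time_displacement[of w v "p v - v" "lam s"] lam(3) insert.prems(1) by (intro add_mono) auto
    finally show ?thesis
      using insert.hyps by simp
  qed
  moreover have "?h (lam s) = s" if "\<forall>u\<in>insert v V. w \<le> \<bar>s - u\<bar>" for s
    using that lam(4) bump_time_outside insert.prems(1) by simp
  ultimately show ?case
    by (intro bexI[of _ "\<lambda>s. ?h (lam s)"]) auto
qed

lemma finite_set_separation:
  fixes V :: "real set"
  assumes "finite V" "\<forall>v\<in>V. 0 < v"
  obtains w where "w > 0" "\<forall>v\<in>V. w < v" "\<forall>v\<in>V. \<forall>v'\<in>V. v \<noteq> v' \<longrightarrow> 2 * w \<le> \<bar>v - v'\<bar>"
proof -
  define W where "W = insert 1 (V \<union> (\<lambda>(v, v'). \<bar>v - v'\<bar>) ` {(v, v') \<in> V \<times> V. v \<noteq> v'})"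
  have "finite W"
    unfolding W_def using assms(1) by (auto intro: finite_subset[of _ "V \<times> V"])
  moreover have "\<forall>z\<in>W. 0 < z"
    unfolding W_def using assms(2) by auto
  ultimately have min: "0 < Min W" "\<And>z. z \<in> W \<Longrightarrow> Min W \<le> z"
    unfolding W_def by auto
  have "V \<subseteq> W"
    unfolding W_def by auto
  moreover have "\<bar>v - v'\<bar> \<in> W" if "v \<in> V" "v' \<in> V" "v \<noteq> v'" for v v'
    unfolding W_def using that by force
  ultimately show ?thesis
    using min by (intro that[of "Min W / 3"]) force+
qed

lemma time_change_through_nearby_points:
  assumes "finite V" "\<forall>v\<in>V. 0 < v" "\<sigma> > 0"
  obtains \<rho> where "\<rho> > 0" "\<rho> \<le> \<sigma>"
    "\<And>p. \<forall>v\<in>V. \<bar>p v - v\<bar> \<le> \<rho> \<Longrightarrow>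
       \<exists>lam\<in>time_changes. (\<forall>v\<in>V. lam v = p v) \<and> (\<forall>s. \<bar>lam s - s\<bar> \<le> \<sigma>)"
proof -
  obtain w where w: "w > 0" "\<forall>v\<in>V. w < v" "\<forall>v\<in>V. \<forall>v'\<in>V. v \<noteq> v' \<longrightarrow> 2 * w \<le> \<bar>v - v'\<bar>"
    using finite_set_separation[OF assms(1,2)] .
  define \<rho> where "\<rho> = min (w / 2) (\<sigma> / (real (card V) + 1))"
  have \<rho>: "\<rho> > 0" "\<rho> < w"
    using w(1) assms(3) unfolding \<rho>_def by auto
  have "\<rho> \<le> \<sigma> / (real (card V) + 1)"
    unfolding \<rho>_def by simp
  then have "(real (card V) + 1) * \<rho> \<le> \<sigma>"
    by (simp add: pos_le_divide_eq mult.commute)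
  moreover have "real (card V) * \<rho> \<le> (real (card V) + 1) * \<rho>" "\<rho> \<le> (real (card V) + 1) * \<rho>"
    using \<rho>(1) by (simp_all add: algebra_simps)
  ultimately have "real (card V) * \<rho> \<le> \<sigma>" "\<rho> \<le> \<sigma>"
    by linarith+
  have "\<exists>lam\<in>time_changes. (\<forall>v\<in>V. lam v = p v) \<and> (\<forall>s. \<bar>lam s - s\<bar> \<le> \<sigma>)"
    if p: "\<forall>v\<in>V. \<bar>p v - v\<bar> \<le> \<rho>" for p
  proof -
    obtain lam where lam: "lam \<in> time_changes" "\<forall>v\<in>V. lam v = p v"
      "\<forall>s. \<bar>lam s - s\<bar> \<le> (\<Sum>v\<in>V. \<bar>p v - v\<bar>)"
      using time_change_through_points[OF assms(1) w, of p] p \<rho>(2) by force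
    have "(\<Sum>v\<in>V. \<bar>p v - v\<bar>) \<le> real (card V) * \<rho>"
      using sum_mono[of V _ "\<lambda>_. \<rho>"] p by simp
    then have "\<bar>lam s - s\<bar> \<le> \<sigma>" for s
      using lam(3) \<open>real (card V) * \<rho> \<le> \<sigma>\<close> by (meson order_trans)
    then show ?thesis
      using lam(1,2) by blast
  qed
  then show ?thesis
    using that \<rho>(1) \<open>\<rho> \<le> \<sigma>\<close> by blast
qed

section \<open>Skorokhod convergence\<close>

lemma eventually_diagonal_choice:
  fixes Q :: "nat \<Rightarrow> nat \<Rightarrow> 'a \<Rightarrow> bool"
  assumes ex: "\<And>j. eventually (\<lambda>n. \<exists>y. Q j n y) sequentially"
    and antimono: "\<And>i j n y. Q j n y \<Longrightarrow> i \<le> j \<Longrightarrow> Q i n y"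
  shows "\<exists>y. \<forall>j. eventually (\<lambda>n. Q j n (y n)) sequentially"
proof -
  define J where "J n = (GREATEST j. j \<le> n \<and> (\<exists>y. Q j n y))" for n
  define y where "y n = (SOME y. Q (J n) n y)" for n
  have "eventually (\<lambda>n. Q j n (y n)) sequentially" for j
    using eventually_conj[OF eventually_ge_at_top[of j] ex[of j]]
  proof (rule eventually_mono)
    fix n
    assume n: "j \<le> n \<and> (\<exists>y. Q j n y)"
    have "J n \<le> n \<and> (\<exists>y. Q (J n) n y)"
      unfolding J_def by (rule GreatestI_nat[where k = j and b = n]) (use n in simp_all)
    then have "Q (J n) n (y n)"
      unfolding y_def by (blast intro: someI_ex)
    moreover have "j \<le> J n"
      unfolding J_def by (rule Greatest_le_nat[where k = j and b = n]) (use n in simp_all)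
    ultimately show "Q j n (y n)"
      by (rule antimono)
  qed
  then show ?thesis
    by blast
qed

lemma skorokhod_tendstoI_eventually:
  fixes xs :: "nat \<Rightarrow> real \<Rightarrow> 'a::metric_space"
  assumes "\<forall>n. cadlag (xs n)" "cadlag x"
    and good: "\<And>T e. T > 0 \<Longrightarrow> e > 0 \<Longrightarrow> eventually (\<lambda>n. \<exists>lam\<in>time_changes.
        (\<forall>s\<in>{0..T}. \<bar>lam s - s\<bar> \<le> e) \<and> (\<forall>s\<in>{0..T}. dist (xs n (lam s)) (x s) \<le> e)) sequentially"
  shows "skorokhod_tendsto xs x"
proof -
  define close where "close n T e lam \<longleftrightarrow>
      (\<forall>s\<in>{0..T}. \<bar>lam s - s\<bar> \<le> e) \<and> (\<forall>s\<in>{0..T}. dist (xs n (lam s)) (x s) \<le> e)"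
    for n T e and lam :: "real \<Rightarrow> real"
  have close_mono: "close n T' e' lam" if "close n T e lam" "T' \<le> T" "e \<le> e'" for n T T' e e' lam
  proof -
    have "s \<in> {0..T}" if "s \<in> {0..T'}" for s
      using that \<open>T' \<le> T\<close> by simp
    then show ?thesis
      using that(1) \<open>e \<le> e'\<close> unfolding close_def by (meson order_trans)
  qed
  define Q where "Q j n lam \<longleftrightarrow> lam \<in> time_changes \<and> close n (real j + 1) (1 / (real j + 1)) lam"
    for j n lam
  have "eventually (\<lambda>n. \<exists>lam. Q j n lam) sequentially" for j
    using good[of "real j + 1" "1 / (real j + 1)"] unfolding Q_def close_def
    by (simp add: Bex_def)
  moreover have "Q i n lam" if "Q j n lam" "i \<le> j" for i j n lam
    using that close_mono[of n "real j + 1" "1 / (real j + 1)" lam "real i + 1" "1 / (real i + 1)"]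
    unfolding Q_def by (simp add: frac_le)
  ultimately obtain lam where lam: "\<And>j. eventually (\<lambda>n. Q j n (lam n)) sequentially"
    using eventually_diagonal_choice[of Q] by blast
  define lam' where "lam' n = (if lam n \<in> time_changes then lam n else (\<lambda>s. s))" for n
  have "lam' n \<in> time_changes" for n
    unfolding lam'_def using time_change_id by simp
  moreover have "eventually (\<lambda>n. close n T e (lam' n)) sequentially" if "T > 0" "e > 0" for T e
  proof -
    obtain j :: nat where "max T (1 / e) \<le> real j"
      using real_arch_simple by blast
    then have "T \<le> real j + 1" "1 / (real j + 1) \<le> e"
      using that by (auto simp: divide_le_eq algebra_simps)
    then have "Q j n (lam n) \<Longrightarrow> close n T e (lam' n)" for n
      using close_mono[of n "real j + 1" "1 / (real j + 1)" "lam n" T e] unfolding Q_def lam'_def by simp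
    then show ?thesis
      using lam[of j] by (auto elim: eventually_mono)
  qed
  ultimately show ?thesis
    unfolding skorokhod_tendsto_def close_def using assms(1,2) by (auto simp: eventually_conj_iff)
qed

lemma dist_vec_le_card:
  fixes x y :: "'a::metric_space ^ 'n"
  assumes "\<And>i. dist (x $ i) (y $ i) \<le> c"
  shows "dist x y \<le> real CARD('n) * c"
proof -
  have "dist x y \<le> (\<Sum>i\<in>UNIV. dist (x $ i) (y $ i))"
    unfolding dist_vec_def by (rule L2_set_le_sum) simp
  also have "\<dots> \<le> (\<Sum>i\<in>(UNIV :: 'n set). c)"
    using assms by (intro sum_mono)
  finally show ?thesis
    by simp
qed

lemma cadlag_vec_nth:
  fixes f :: "real \<Rightarrow> 'a::metric_space ^ 'n"
  assumes "cadlag f"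
  shows "cadlag (\<lambda>s. f s $ i)"
proof -
  have "((\<lambda>s. f s $ i) \<longlongrightarrow> f s $ i) (at_right s)" if "s \<ge> 0" for s
    using assms that unfolding cadlag_def continuous_within by (simp add: tendsto_vec_nth)
  moreover have "\<exists>l. ((\<lambda>s. f s $ i) \<longlongrightarrow> l) (at_left s)" if "s > 0" for s
    using assms that unfolding cadlag_def by (metis tendsto_vec_nth)
  ultimately show ?thesis
    unfolding cadlag_def continuous_within by blast
qed

lemma cadlag_vecI:
  fixes f :: "real \<Rightarrow> 'a::metric_space ^ 'n"
  assumes "\<And>i. cadlag (\<lambda>s. f s $ i)"
  shows "cadlag f"
proof -
  have "continuous (at_right s) f" if "s \<ge> 0" for s
    unfolding continuous_within
  proof (rule vec_tendstoI)
    show "((\<lambda>x. f x $ i) \<longlongrightarrow> f s $ i) (at_right s)" for i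
      using assms[of i] that unfolding cadlag_def continuous_within by simp
  qed
  moreover have "\<exists>l. (f \<longlongrightarrow> l) (at_left s)" if "s > 0" for s
  proof -
    have "\<forall>i. \<exists>l. ((\<lambda>s. f s $ i) \<longlongrightarrow> l) (at_left s)"
      using assms that unfolding cadlag_def by blast
    then obtain L where "\<And>i. ((\<lambda>s. f s $ i) \<longlongrightarrow> L i) (at_left s)"
      by (metis choice)
    then have "(f \<longlongrightarrow> (\<chi> i. L i)) (at_left s)"
      by (intro vec_tendstoI) (simp only: vec_lambda_beta)
    then show ?thesis ..
  qed
  ultimately show ?thesis
    unfolding cadlag_def by blast
qed

lemma skorokhod_tendsto_vec_nth:
  fixes xs :: "nat \<Rightarrow> real \<Rightarrow> 'a::metric_space ^ 'n"
  assumes "skorokhod_tendsto xs x"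
  shows "skorokhod_tendsto (\<lambda>n s. xs n s $ i) (\<lambda>s. x s $ i)"
proof -
  obtain lam where "\<forall>n. lam n \<in> time_changes"
    "\<forall>T>0. \<forall>e>0. eventually (\<lambda>n. \<forall>s\<in>{0..T}. \<bar>lam n s - s\<bar> \<le> e) sequentially"
    and fit: "\<forall>T>0. \<forall>e>0. eventually (\<lambda>n. \<forall>s\<in>{0..T}. dist (xs n (lam n s)) (x s) \<le> e) sequentially"
    and "\<forall>n. cadlag (xs n)" "cadlag x"
    using assms unfolding skorokhod_tendsto_def by blast
  moreover have "eventually (\<lambda>n. \<forall>s\<in>{0..T}. dist (xs n (lam n s) $ i) (x s $ i) \<le> e) sequentially"
    if "T > 0" "e > 0" for T e
  proof -
    have "eventually (\<lambda>n. \<forall>s\<in>{0..T}. dist (xs n (lam n s)) (x s) \<le> e) sequentially"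
      using fit that by blast
    then show ?thesis
      by (rule eventually_mono) (use dist_vec_nth_le order_trans in blast)
  qed
  ultimately show ?thesis
    unfolding skorokhod_tendsto_def by (blast intro: cadlag_vec_nth)
qed

section \<open>The modulus of cadlag functions\<close>

lemma at_left_tendsto_dist_less:
  fixes f :: "real \<Rightarrow> 'a::metric_space"
  assumes "(f \<longlongrightarrow> l) (at_left r)" "e > 0"
  obtains \<eta> where "\<eta> > 0" "\<And>u. r - \<eta> < u \<Longrightarrow> u < r \<Longrightarrow> dist (f u) l < e"
proof -
  have "eventually (\<lambda>u. dist (f u) l < e) (at_left r)"
    using assms tendsto_iff by blast
  then obtain b where "b < r" "\<And>u. b < u \<Longrightarrow> u < r \<Longrightarrow> dist (f u) l < e"
    unfolding eventually_at_left_field by blast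
  then show ?thesis
    using that[of "r - b"] by simp
qed

lemma cadlag_right_dist_less:
  fixes f :: "real \<Rightarrow> 'a::metric_space"
  assumes "cadlag f" "0 \<le> r" "e > 0"
  obtains \<eta> where "\<eta> > 0" "\<And>u. r \<le> u \<Longrightarrow> u < r + \<eta> \<Longrightarrow> dist (f u) (f r) < e"
proof -
  have "(f \<longlongrightarrow> f r) (at_right r)"
    using assms(1,2) unfolding cadlag_def continuous_within by simp
  then have "eventually (\<lambda>u. dist (f u) (f r) < e) (at_right r)"
    using assms(3) tendsto_iff by blast
  then obtain b where "r < b" "\<And>u. r < u \<Longrightarrow> u < b \<Longrightarrow> dist (f u) (f r) < e"
    unfolding eventually_at_right_field by blast
  then show ?thesis
    using that[of "b - r"] assms(3) by (metis add.commute diff_add_cancel diff_gt_0_iff_gt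
        dist_self order_le_less)
qed

lemma cadlag_tendsto_left_Lim:
  assumes "cadlag f" "0 < r"
  shows "(f \<longlongrightarrow> Lim (at_left r) f) (at_left r)"
proof -
  obtain l where "(f \<longlongrightarrow> l) (at_left r)"
    using assms unfolding cadlag_def by blast
  then show ?thesis
    by (simp add: tendsto_Lim trivial_limit_at_left_real)
qed

definition oscillation_le_off :: "(real \<Rightarrow> 'a::metric_space) \<Rightarrow> real \<Rightarrow> real \<Rightarrow> real set \<Rightarrow> real \<Rightarrow> bool"
  where "oscillation_le_off f T \<delta> V c \<longleftrightarrow> (\<forall>s s'. 0 \<le> s \<longrightarrow> s \<le> s' \<longrightarrow> s' \<le> T \<longrightarrow> s' - s < \<delta> \<longrightarrow>
     (\<forall>v\<in>V. \<not> (s < v \<and> v \<le> s')) \<longrightarrow> dist (f s') (f s) \<le> c)"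

lemma oscillation_le_off_mono:
  "oscillation_le_off f T \<delta> V c \<Longrightarrow> \<delta>' \<le> \<delta> \<Longrightarrow> oscillation_le_off f T \<delta>' V c"
  unfolding oscillation_le_off_def by (meson less_le_trans)

lemma cadlag_near_point:
  fixes f :: "real \<Rightarrow> 'a::metric_space"
  assumes f: "cadlag f" and "0 \<le> r" "e > 0"
  obtains \<eta> where "\<eta> > 0" "\<And>u. r \<le> u \<Longrightarrow> u < r + \<eta> \<Longrightarrow> dist (f u) (f r) < e"
    "\<And>u. r - \<eta> < u \<Longrightarrow> u < r \<Longrightarrow> 0 \<le> u \<Longrightarrow> dist (f u) (Lim (at_left r) f) < e"
proof -
  obtain \<eta>1 where \<eta>1: "\<eta>1 > 0" "\<And>u. r \<le> u \<Longrightarrow> u < r + \<eta>1 \<Longrightarrow> dist (f u) (f r) < e"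
    using cadlag_right_dist_less[OF assms] by blast
  show ?thesis
  proof (cases "0 < r")
    case True
    obtain \<eta>2 where "\<eta>2 > 0" "\<And>u. r - \<eta>2 < u \<Longrightarrow> u < r \<Longrightarrow> dist (f u) (Lim (at_left r) f) < e"
      using at_left_tendsto_dist_less[OF cadlag_tendsto_left_Lim[OF f True] \<open>e > 0\<close>] by blast
    with \<eta>1 show ?thesis
      using that[of "min \<eta>1 \<eta>2"] by auto
  next
    case False
    with \<eta>1 \<open>0 \<le> r\<close> show ?thesis
      using that[of \<eta>1] by auto
  qed
qed

lemma dist_le_near_point:
  fixes f :: "real \<Rightarrow> 'a::metric_space"
  assumes right: "\<And>u. r \<le> u \<Longrightarrow> u < r + \<eta> \<Longrightarrow> dist (f u) (f r) < e / 2"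
    and left: "\<And>u. r - \<eta> < u \<Longrightarrow> u < r \<Longrightarrow> 0 \<le> u \<Longrightarrow> dist (f u) L < e / 2"
    and s: "0 \<le> s" "r - \<eta> < s" "s \<le> s'" "s' < r + \<eta>"
    and jump: "s < r \<Longrightarrow> r \<le> s' \<Longrightarrow> dist (f r) L \<le> e"
  shows "dist (f s') (f s) \<le> 2 * e"
proof -
  consider "r \<le> s" | "s' < r" | "s < r" "r \<le> s'"
    by linarith
  then show ?thesis
  proof cases
    case 1
    then have "dist (f s) (f r) < e / 2" "dist (f s') (f r) < e / 2"
      using right s by auto
    then show ?thesis
      using dist_triangle2[of "f s'" "f s" "f r"] zero_le_dist[of "f s" "f r"] by linarith
  next
    case 2
    then have "dist (f s) L < e / 2" "dist (f s') L < e / 2"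
      using left s by auto
    then show ?thesis
      using dist_triangle2[of "f s'" "f s" L] zero_le_dist[of "f s" L] by linarith
  next
    case 3
    then have "dist (f s') (f r) < e / 2" "dist (f s) L < e / 2" "dist (f r) L \<le> e"
      using right left jump s by auto
    then show ?thesis
      using dist_triangle[of "f s'" "f s" "f r"] dist_triangle2[of "f r" "f s" L] by linarith
  qed
qed

text \<open>Take a Lebesgue number for the cover of \<open>[0, T]\<close> by the neighbourhoods given by
  \<open>cadlag_near_point\<close> for \<open>\<epsilon>/2\<close>; \<open>V\<close> collects the centres of a finite subcover at which
  \<open>f\<close> jumps by more than \<open>\<epsilon>\<close>.\<close>
lemma cadlag_oscillation_le_off_big_jumps:
  fixes f :: "real \<Rightarrow> 'a::metric_space"
  assumes f: "cadlag f" and \<epsilon>: "\<epsilon> > 0"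
  obtains V \<delta> where "finite V" "\<delta> > 0"
    "\<forall>v\<in>V. 0 < v \<and> v \<le> T \<and> (\<exists>l. (f \<longlongrightarrow> l) (at_left v) \<and> \<epsilon> < dist (f v) l)"
    "oscillation_le_off f T \<delta> V (2 * \<epsilon>)"
proof -
  define L where "L r = Lim (at_left r) f" for r
  have "\<forall>r\<in>{0..T}. \<exists>\<eta>. \<eta> > 0 \<and> (\<forall>u. r \<le> u \<longrightarrow> u < r + \<eta> \<longrightarrow> dist (f u) (f r) < \<epsilon> / 2) \<and>
      (\<forall>u. r - \<eta> < u \<longrightarrow> u < r \<longrightarrow> 0 \<le> u \<longrightarrow> dist (f u) (L r) < \<epsilon> / 2)"
    unfolding L_def using \<epsilon> by (metis atLeastAtMost_iff cadlag_near_point[OF f] half_gt_zero)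
  then obtain \<eta> where \<eta>: "\<And>r. r \<in> {0..T} \<Longrightarrow> \<eta> r > 0"
    "\<And>r u. r \<in> {0..T} \<Longrightarrow> r \<le> u \<Longrightarrow> u < r + \<eta> r \<Longrightarrow> dist (f u) (f r) < \<epsilon> / 2"
    "\<And>r u. r \<in> {0..T} \<Longrightarrow> r - \<eta> r < u \<Longrightarrow> u < r \<Longrightarrow> 0 \<le> u \<Longrightarrow> dist (f u) (L r) < \<epsilon> / 2"
    by metis
  have "{0..T} \<subseteq> (\<Union>r\<in>{0..T}. ball r (\<eta> r))"
    using \<eta>(1) by force
  then obtain C where C: "C \<subseteq> {0..T}" "finite C" "{0..T} \<subseteq> (\<Union>r\<in>C. ball r (\<eta> r))"
    using compactE_image[OF compact_Icc[of 0 T], of "{0..T}" "\<lambda>r. ball r (\<eta> r)"] by auto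
  obtain \<delta> where \<delta>: "\<delta> > 0" "\<And>s. s \<in> {0..T} \<Longrightarrow> \<exists>r\<in>C. ball s \<delta> \<subseteq> ball r (\<eta> r)"
    using Heine_Borel_lemma[OF compact_Icc C(3)] by auto
  define V where "V = {r \<in> C. 0 < r \<and> \<epsilon> < dist (f r) (L r)}"
  have "dist (f s') (f s) \<le> 2 * \<epsilon>"
    if s: "0 \<le> s" "s \<le> s'" "s' \<le> T" "s' - s < \<delta>" and no_jump: "\<forall>v\<in>V. \<not> (s < v \<and> v \<le> s')" for s s'
  proof -
    obtain r where r: "r \<in> C" "ball s \<delta> \<subseteq> ball r (\<eta> r)"
      using \<delta>(2)[of s] s by auto
    have "s \<in> ball r (\<eta> r)" "s' \<in> ball r (\<eta> r)"
      using r(2) s \<delta>(1) by (auto simp: dist_real_def subset_iff)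
    then have "r - \<eta> r < s" "s' < r + \<eta> r"
      by (auto simp: dist_real_def)
    moreover have "dist (f r) (L r) \<le> \<epsilon>" if "s < r" "r \<le> s'"
      using no_jump that r(1) s(1) unfolding V_def by auto
    ultimately show ?thesis
      using r(1) C(1) s(1,2) \<eta>(2,3) by (intro dist_le_near_point[where \<eta> = "\<eta> r" and L = "L r"]) auto
  qed
  then have "oscillation_le_off f T \<delta> V (2 * \<epsilon>)"
    unfolding oscillation_le_off_def by blast
  moreover have "\<forall>v\<in>V. 0 < v \<and> v \<le> T \<and> (\<exists>l. (f \<longlongrightarrow> l) (at_left v) \<and> \<epsilon> < dist (f v) l)"
    using C(1) cadlag_tendsto_left_Lim[OF f] unfolding V_def L_def by auto
  moreover have "finite V"
    using C(2) unfolding V_def by simp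
  ultimately show ?thesis
    using that \<delta>(1) by blast
qed

lemma cadlag_family_oscillation_le_off_big_jumps:
  fixes F :: "'i::finite \<Rightarrow> real \<Rightarrow> 'a::metric_space"
  assumes "\<And>i. cadlag (F i)" "\<epsilon> > 0"
  obtains V \<delta> where "\<And>i. finite (V i)" "\<delta> > 0"
    "\<And>i. \<forall>v\<in>V i. 0 < v \<and> v \<le> T \<and> (\<exists>l. (F i \<longlongrightarrow> l) (at_left v) \<and> \<epsilon> < dist (F i v) l)"
    "\<And>i. oscillation_le_off (F i) T \<delta> (V i) (2 * \<epsilon>)"
proof -
  have "\<exists>V \<delta>. finite V \<and> \<delta> > 0 \<and>
      (\<forall>v\<in>V. 0 < v \<and> v \<le> T \<and> (\<exists>l. (F i \<longlongrightarrow> l) (at_left v) \<and> \<epsilon> < dist (F i v) l)) \<and>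
      oscillation_le_off (F i) T \<delta> V (2 * \<epsilon>)" for i
    by (rule cadlag_oscillation_le_off_big_jumps[OF assms(1)[of i] assms(2), where T = T]) blast
  then obtain V \<delta> where V: "\<And>i. finite (V i)" "\<And>i. \<delta> i > 0"
    "\<And>i. \<forall>v\<in>V i. 0 < v \<and> v \<le> T \<and> (\<exists>l. (F i \<longlongrightarrow> l) (at_left v) \<and> \<epsilon> < dist (F i v) l)"
    "\<And>i. oscillation_le_off (F i) T (\<delta> i) (V i) (2 * \<epsilon>)"
    by metis
  have "Min (range \<delta>) > 0" "\<And>i. Min (range \<delta>) \<le> \<delta> i"
    using V(2) by auto
  then show ?thesis
    using that[of V "Min (range \<delta>)"] V oscillation_le_off_mono by blast
qed

section \<open>One time change for finitely many functions\<close>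

text \<open>Write \<open>lam s = \<mu> w\<close>: then \<open>w\<close> is close to \<open>s\<close> and on the same side of every point of
  \<open>V\<close>, so \<open>F w\<close> is close to \<open>F s\<close>.\<close>
lemma retimed_dist_le:
  fixes g F :: "real \<Rightarrow> 'a::metric_space"
  assumes \<mu>: "\<mu> \<in> time_changes" and lam: "lam \<in> time_changes"
    and osc: "oscillation_le_off F T' \<delta> V c"
    and V: "\<forall>v\<in>V. 0 \<le> v \<and> lam v = \<mu> v"
    and \<mu>_near: "\<forall>s\<in>{0..T'}. \<bar>\<mu> s - s\<bar> \<le> \<rho>" and lam_near: "\<bar>lam s - s\<bar> \<le> \<sigma>"
    and fit: "\<forall>s\<in>{0..T'}. dist (g (\<mu> s)) (F s) \<le> e"
    and "0 \<le> \<rho>" "\<rho> + \<sigma> < \<delta>" "T + \<rho> + \<sigma> \<le> T'"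
    and s: "0 \<le> s" "s \<le> T"
  shows "dist (g (lam s)) (F s) \<le> c + e"
proof -
  obtain w where w: "0 \<le> w" "\<mu> w = lam s"
    using time_change_surj[OF \<mu> time_change_nonneg[OF lam s(1)]] by blast
  have "0 \<le> T'"
    using assms(8-10) s lam_near by linarith
  have "w \<le> T'"
  proof (rule ccontr)
    assume "\<not> w \<le> T'"
    then have "\<mu> T' < lam s"
      using time_change_less[OF \<mu> \<open>0 \<le> T'\<close>, of w] w(2) by simp
    moreover have "T' - \<rho> \<le> \<mu> T'"
      using \<mu>_near[rule_format, of T'] \<open>0 \<le> T'\<close> by (simp add: abs_le_iff)
    ultimately show False
      using lam_near s(2) assms(10) by (simp add: abs_le_iff)
  qed
  then have "\<bar>\<mu> w - w\<bar> \<le> \<rho>"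
    using \<mu>_near w(1) by simp
  then have close: "\<bar>w - s\<bar> < \<delta>"
    using lam_near w(2) assms(9) by linarith
  have no_jump: "\<not> (min s w < v \<and> v \<le> max s w)" if "v \<in> V" for v
  proof -
    have "0 \<le> v" "lam v = \<mu> v"
      using V that by auto
    then have "s < v \<longleftrightarrow> w < v"
      using time_change_less_iff[OF lam s(1), of v] time_change_less_iff[OF \<mu> w(1), of v] w(2) by simp
    then show ?thesis
      by auto
  qed
  have "dist (F w) (F s) \<le> c"
  proof (cases "s \<le> w")
    case True
    then show ?thesis
      using osc no_jump close s(1) \<open>w \<le> T'\<close> unfolding oscillation_le_off_def by auto
  next
    case False
    then show ?thesis
      using osc no_jump close w(1) s \<open>0 \<le> T'\<close> assms(10) \<open>0 \<le> \<rho>\<close> lam_near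
      unfolding oscillation_le_off_def by (auto simp: dist_commute)
  qed
  moreover have "dist (g (lam s)) (F w) \<le> e"
    using fit w \<open>w \<le> T'\<close> by (metis atLeastAtMost_iff)
  ultimately show ?thesis
    using dist_triangle[of "g (lam s)" "F s" "F w"] by linarith
qed

lemma common_time_change_for_family:
  fixes G F :: "'i \<Rightarrow> real \<Rightarrow> 'a::metric_space" and \<mu> :: "'i \<Rightarrow> real \<Rightarrow> real"
  assumes \<mu>: "\<And>i. \<mu> i \<in> time_changes"
    and osc: "\<And>i. oscillation_le_off (F i) T' \<delta> (V i) c"
    and V: "\<And>i. \<forall>v\<in>V i. 0 \<le> v \<and> v \<le> T'"
    and agree: "\<And>i j v. v \<in> V i \<Longrightarrow> v \<in> V j \<Longrightarrow> \<mu> i v = \<mu> j v"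
    and \<mu>_near: "\<And>i. \<forall>s\<in>{0..T'}. \<bar>\<mu> i s - s\<bar> \<le> \<rho>"
    and fit: "\<And>i. \<forall>s\<in>{0..T'}. dist (G i (\<mu> i s)) (F i s) \<le> e"
    and through: "\<And>p. \<forall>v\<in>(\<Union>i. V i). \<bar>p v - v\<bar> \<le> \<rho> \<Longrightarrow>
        \<exists>lam\<in>time_changes. (\<forall>v\<in>(\<Union>i. V i). lam v = p v) \<and> (\<forall>s. \<bar>lam s - s\<bar> \<le> \<sigma>)"
    and "0 \<le> \<rho>" "\<rho> + \<sigma> < \<delta>" "T + \<rho> + \<sigma> \<le> T'"
  obtains lam where "lam \<in> time_changes" "\<And>s. \<bar>lam s - s\<bar> \<le> \<sigma>"
    "\<And>i s. 0 \<le> s \<Longrightarrow> s \<le> T \<Longrightarrow> dist (G i (lam s)) (F i s) \<le> c + e"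
proof -
  define p where "p v = \<mu> (SOME i. v \<in> V i) v" for v
  have p: "\<mu> i v = p v" if "v \<in> V i" for i v
  proof -
    have "v \<in> V (SOME i. v \<in> V i)"
      using that by (rule someI)
    then show ?thesis
      unfolding p_def using agree that by blast
  qed
  have "\<bar>p v - v\<bar> \<le> \<rho>" if "v \<in> V i" for i v
  proof -
    have "v \<in> {0..T'}"
      using V that by auto
    then show ?thesis
      using \<mu>_near[of i, rule_format, of v] p[OF that] by simp
  qed
  then have "\<forall>v\<in>(\<Union>i. V i). \<bar>p v - v\<bar> \<le> \<rho>"
    by blast
  then obtain lam where lam: "lam \<in> time_changes" "\<forall>v\<in>(\<Union>i. V i). lam v = p v" "\<And>s. \<bar>lam s - s\<bar> \<le> \<sigma>"
    using through by blast
  have "dist (G i (lam s)) (F i s) \<le> c + e" if "0 \<le> s" "s \<le> T" for i s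
  proof (rule retimed_dist_le[OF \<mu> lam(1) osc _ \<mu>_near lam(3) fit assms(8-10) that])
    show "\<forall>v\<in>V i. 0 \<le> v \<and> lam v = \<mu> i v"
    proof
      fix v
      assume "v \<in> V i"
      moreover have "v \<in> (\<Union>i. V i)"
        using \<open>v \<in> V i\<close> by blast
      ultimately show "0 \<le> v \<and> lam v = \<mu> i v"
        using V[of i] lam(2) p[of v i] by simp
    qed
  qed
  then show ?thesis
    using that lam(1,3) by blast
qed

lemma eventually_common_time_change:
  fixes G :: "nat \<Rightarrow> 'i::finite \<Rightarrow> real \<Rightarrow> 'a::metric_space" and F :: "'i \<Rightarrow> real \<Rightarrow> 'a"
    and \<mu> :: "'i \<Rightarrow> nat \<Rightarrow> real \<Rightarrow> real"
  assumes \<mu>: "\<And>i n. \<mu> i n \<in> time_changes"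
    and \<mu>_conv: "\<And>i T e. T > 0 \<Longrightarrow> e > 0 \<Longrightarrow>
        eventually (\<lambda>n. \<forall>s\<in>{0..T}. \<bar>\<mu> i n s - s\<bar> \<le> e) sequentially"
    and fit: "\<And>i T e. T > 0 \<Longrightarrow> e > 0 \<Longrightarrow>
        eventually (\<lambda>n. \<forall>s\<in>{0..T}. dist (G n i (\<mu> i n s)) (F i s) \<le> e) sequentially"
    and F: "\<And>i. cadlag (F i)"
    and agree: "\<And>V \<epsilon>. \<epsilon> > 0 \<Longrightarrow> (\<And>i. finite (V i)) \<Longrightarrow>
        (\<And>i. \<forall>v\<in>V i. 0 < v \<and> (\<exists>l. (F i \<longlongrightarrow> l) (at_left v) \<and> \<epsilon> < dist (F i v) l)) \<Longrightarrow>
        eventually (\<lambda>n. \<forall>i j v. v \<in> V i \<longrightarrow> v \<in> V j \<longrightarrow> \<mu> i n v = \<mu> j n v) sequentially"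
    and T: "T > 0" and e: "e > 0"
  shows "eventually (\<lambda>n. \<exists>lam\<in>time_changes. (\<forall>s\<in>{0..T}. \<bar>lam s - s\<bar> \<le> e) \<and>
      (\<forall>i. \<forall>s\<in>{0..T}. dist (G n i (lam s)) (F i s) \<le> e)) sequentially"
proof -
  define T' where "T' = T + 1"
  have "T' > 0" "e / 3 > 0"
    unfolding T'_def using T e by auto
  obtain V \<delta> where V: "\<And>i. finite (V i)" "\<delta> > 0"
    "\<And>i. \<forall>v\<in>V i. 0 < v \<and> v \<le> T' \<and> (\<exists>l. (F i \<longlongrightarrow> l) (at_left v) \<and> e / 3 < dist (F i v) l)"
    "\<And>i. oscillation_le_off (F i) T' \<delta> (V i) (2 * (e / 3))"
    by (rule cadlag_family_oscillation_le_off_big_jumps[where F = F and \<epsilon> = "e / 3" and T = T',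
          OF F \<open>e / 3 > 0\<close>]) blast
  define \<sigma> where "\<sigma> = min e (min (\<delta> / 4) (1 / 4))"
  have "finite (\<Union>i. V i)" "\<forall>v\<in>(\<Union>i. V i). 0 < v" "\<sigma> > 0"
    using V(1-3) e unfolding \<sigma>_def by auto
  then obtain \<rho> where "\<rho> > 0" "\<rho> \<le> \<sigma>" and through: "\<And>p. \<forall>v\<in>(\<Union>i. V i). \<bar>p v - v\<bar> \<le> \<rho> \<Longrightarrow>
      \<exists>lam\<in>time_changes. (\<forall>v\<in>(\<Union>i. V i). lam v = p v) \<and> (\<forall>s. \<bar>lam s - s\<bar> \<le> \<sigma>)"
    by (rule time_change_through_nearby_points) blast
  have \<rho>: "0 \<le> \<rho>" "\<rho> + \<sigma> < \<delta>" "T + \<rho> + \<sigma> \<le> T'"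
    using \<open>\<rho> > 0\<close> \<open>\<rho> \<le> \<sigma>\<close> V(2) unfolding \<sigma>_def T'_def by auto
  have "eventually (\<lambda>n. \<forall>i j v. v \<in> V i \<longrightarrow> v \<in> V j \<longrightarrow> \<mu> i n v = \<mu> j n v) sequentially"
    using V(1,3) by (intro agree[OF \<open>e / 3 > 0\<close>]) auto
  moreover have "eventually (\<lambda>n. \<forall>i. \<forall>s\<in>{0..T'}. \<bar>\<mu> i n s - s\<bar> \<le> \<rho>) sequentially"
    by (intro eventually_all_finite \<mu>_conv \<open>T' > 0\<close> \<open>\<rho> > 0\<close>)
  moreover have "eventually (\<lambda>n. \<forall>i. \<forall>s\<in>{0..T'}. dist (G n i (\<mu> i n s)) (F i s) \<le> e / 3) sequentially"
    by (intro eventually_all_finite fit \<open>T' > 0\<close> \<open>e / 3 > 0\<close>)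
  ultimately show ?thesis
  proof eventually_elim
    case (elim n)
    have "\<forall>v\<in>V i. 0 \<le> v \<and> v \<le> T'" for i
      using V(3)[of i] by auto
    then obtain lam where lam: "lam \<in> time_changes" "\<And>s. \<bar>lam s - s\<bar> \<le> \<sigma>"
      "\<And>i s. 0 \<le> s \<Longrightarrow> s \<le> T \<Longrightarrow> dist (G n i (lam s)) (F i s) \<le> 2 * (e / 3) + e / 3"
      using common_time_change_for_family[where G = "G n" and \<mu> = "\<lambda>i. \<mu> i n",
          OF \<mu> V(4) _ _ _ _ through \<rho>] elim by blast
    have "\<bar>lam s - s\<bar> \<le> e" for s
      using lam(2)[of s] unfolding \<sigma>_def by linarith
    with lam(1,3) show ?case
      by (intro bexI[of _ lam]) auto
  qed
qed

lemma skorokhod_tendsto_matrix_of_entries: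
  fixes xs :: "nat \<Rightarrow> real \<Rightarrow> 'a::metric_space ^ 'n ^ 'm" and F :: "'m \<times> 'n \<Rightarrow> real \<Rightarrow> 'a"
    and \<mu> :: "'m \<times> 'n \<Rightarrow> nat \<Rightarrow> real \<Rightarrow> real"
  assumes xs: "\<And>n. cadlag (xs n)" and F: "\<And>ab. cadlag (F ab)"
    and \<mu>: "\<And>ab n. \<mu> ab n \<in> time_changes"
    and \<mu>_conv: "\<And>ab T e. T > 0 \<Longrightarrow> e > 0 \<Longrightarrow>
        eventually (\<lambda>n. \<forall>s\<in>{0..T}. \<bar>\<mu> ab n s - s\<bar> \<le> e) sequentially"
    and fit: "\<And>ab T e. T > 0 \<Longrightarrow> e > 0 \<Longrightarrow> eventually (\<lambda>n. \<forall>s\<in>{0..T}.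
        dist (xs n (\<mu> ab n s) $ fst ab $ snd ab) (F ab s) \<le> e) sequentially"
    and agree: "\<And>V \<epsilon>. \<epsilon> > 0 \<Longrightarrow> (\<And>ab. finite (V ab)) \<Longrightarrow>
        (\<And>ab. \<forall>v\<in>V ab. 0 < v \<and> (\<exists>l. (F ab \<longlongrightarrow> l) (at_left v) \<and> \<epsilon> < dist (F ab v) l)) \<Longrightarrow>
        eventually (\<lambda>n. \<forall>ab ab' v. v \<in> V ab \<longrightarrow> v \<in> V ab' \<longrightarrow> \<mu> ab n v = \<mu> ab' n v) sequentially"
  shows "skorokhod_tendsto xs (\<lambda>s. \<chi> a b. F (a, b) s)"
proof (rule skorokhod_tendstoI_eventually)
  show "\<forall>n. cadlag (xs n)"
    using xs by blast
  show "cadlag (\<lambda>s. \<chi> a b. F (a, b) s)"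
    using F by (simp add: cadlag_vecI)
  fix T e :: real
  assume "T > 0" "e > 0"
  define c where "c = e / (real CARD('m) * real CARD('n))"
  have "(1::real) \<le> real CARD('m)" "(1::real) \<le> real CARD('n)"
    by (simp_all add: Suc_le_eq)
  then have "1 \<le> real CARD('m) * real CARD('n)"
    using mult_mono[of 1 "real CARD('m)" 1 "real CARD('n)"] by simp
  then have "c > 0" "c \<le> e" "real CARD('m) * (real CARD('n) * c) = e"
    unfolding c_def using \<open>e > 0\<close> by (auto simp: divide_le_eq)
  have "eventually (\<lambda>n. \<exists>lam\<in>time_changes. (\<forall>s\<in>{0..T}. \<bar>lam s - s\<bar> \<le> c) \<and>
      (\<forall>ab. \<forall>s\<in>{0..T}. dist (xs n (lam s) $ fst ab $ snd ab) (F ab s) \<le> c)) sequentially"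
    by (rule eventually_common_time_change[where G = "\<lambda>n ab s. xs n s $ fst ab $ snd ab",
          OF \<mu> \<mu>_conv fit F agree \<open>T > 0\<close> \<open>c > 0\<close>])
  then show "eventually (\<lambda>n. \<exists>lam\<in>time_changes. (\<forall>s\<in>{0..T}. \<bar>lam s - s\<bar> \<le> e) \<and>
      (\<forall>s\<in>{0..T}. dist (xs n (lam s)) (\<chi> a b. F (a, b) s) \<le> e)) sequentially"
  proof eventually_elim
    case (elim n)
    then obtain lam where "lam \<in> time_changes" "\<forall>s\<in>{0..T}. \<bar>lam s - s\<bar> \<le> c"
      and entries: "\<forall>ab. \<forall>s\<in>{0..T}. dist (xs n (lam s) $ fst ab $ snd ab) (F ab s) \<le> c"
      by blast
    moreover have "dist (xs n (lam s)) (\<chi> a b. F (a, b) s) \<le> e" if "s \<in> {0..T}" for s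
    proof -
      have "dist (xs n (lam s) $ a $ b) ((\<chi> a b. F (a, b) s) $ a $ b) \<le> c" for a b
        using bspec[OF spec[OF entries, of "(a, b)"] that] by simp
      then have "dist (xs n (lam s)) (\<chi> a b. F (a, b) s) \<le> real CARD('m) * (real CARD('n) * c)"
        by (intro dist_vec_le_card)
      then show ?thesis
        using \<open>real CARD('m) * (real CARD('n) * c) = e\<close> by simp
    qed
    ultimately show ?case
      using \<open>c \<le> e\<close> by (intro bexI[of _ lam]) auto
  qed
qed

section \<open>Partitions and the discrete quadratic variation\<close>

lemma partition_point_less:
  assumes ps: "partition_seq t k" and "i < j" "j \<le> k n"
  shows "t n i < t n j"
  using assms(2,3)
proof (induction j)
  case 0
  then show ?case
    by simp
next
  case (Suc j)
  have "t n j < t n (Suc j)"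
    using ps Suc.prems unfolding partition_seq_def by auto
  moreover have "t n i \<le> t n j"
    using Suc by (cases "i = j") auto
  ultimately show ?case
    by simp
qed

lemma partition_point_le:
  "partition_seq t k \<Longrightarrow> i \<le> j \<Longrightarrow> j \<le> k n \<Longrightarrow> t n i \<le> t n j"
  using partition_point_less[of t k i j n] by (cases "i = j") auto

lemma partition_point_inj:
  assumes "partition_seq t k" "i \<le> k n" "j \<le> k n" "t n i = t n j"
  shows "i = j"
  using partition_point_less[OF assms(1), of i j n] partition_point_less[OF assms(1), of j i n] assms
  by (cases i j rule: linorder_cases) auto

lemma partition_straddle_unique:
  assumes ps: "partition_seq t k" and "j < k n" "j' < k n"
    and "t n j < v" "v \<le> t n (Suc j)" "t n j' < v" "v \<le> t n (Suc j')"
  shows "j = j'"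
proof (rule ccontr)
  assume "j \<noteq> j'"
  then have "t n (Suc j) \<le> t n j' \<or> t n (Suc j') \<le> t n j"
    using partition_point_le[OF ps] assms(2,3) by (meson Suc_leI le_simps(1) linorder_neqE_nat)
  then show False
    using assms(4-) by linarith
qed

lemma partition_mesh_eventually_less:
  assumes ps: "partition_seq t k" and "\<eta> > 0"
  shows "eventually (\<lambda>n. \<forall>j<k n. t n j \<le> T \<longrightarrow> t n (Suc j) - t n j < \<eta>) sequentially"
proof -
  define mesh where "mesh n = Max ({t n (Suc i) - t n i | i. i < k n \<and> t n i \<le> T} \<union> {0})" for n
  have "mesh \<longlonglongrightarrow> 0"
    using ps unfolding partition_seq_def mesh_def by blast
  then have "eventually (\<lambda>n. mesh n < \<eta>) sequentially"
    using assms(2) by (rule order_tendstoD)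
  moreover have "t n (Suc j) - t n j \<le> mesh n" if "j < k n" "t n j \<le> T" for n j
    unfolding mesh_def using that by (intro Max_ge) auto
  ultimately show ?thesis
    by (auto elim!: eventually_mono intro: le_less_trans)
qed

text \<open>A short interval not straddling \<open>v\<close> lies right of \<open>v\<close>, where \<open>x\<close> is close to \<open>x v\<close>,
  or left of \<open>v\<close>, where \<open>x\<close> is close to its left limit at \<open>v\<close>.\<close>
lemma partition_large_increment_straddles:
  fixes x :: "real \<Rightarrow> 'a::metric_space"
  assumes ps: "partition_seq t k" and x: "cadlag x" and "0 < v" "0 < c"
  obtains \<eta> where "\<eta> > 0" "eventually (\<lambda>n. \<forall>j<k n. \<bar>t n j - v\<bar> < \<eta> \<longrightarrow>
      c \<le> dist (x (t n (Suc j))) (x (t n j)) \<longrightarrow> t n j < v \<and> v \<le> t n (Suc j)) sequentially"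
proof -
  obtain \<eta>1 where \<eta>1: "\<eta>1 > 0" "\<And>u. v \<le> u \<Longrightarrow> u < v + \<eta>1 \<Longrightarrow> dist (x u) (x v) < c/2"
    using cadlag_right_dist_less[OF x, of v "c/2"] assms(3,4) by auto
  obtain l where "(x \<longlongrightarrow> l) (at_left v)"
    using x assms(3) unfolding cadlag_def by blast
  then obtain \<eta>2 where \<eta>2: "\<eta>2 > 0" "\<And>u. v - \<eta>2 < u \<Longrightarrow> u < v \<Longrightarrow> dist (x u) l < c/2"
    using at_left_tendsto_dist_less[of x l v "c/2"] assms(4) by auto
  define \<eta> where "\<eta> = min (min \<eta>1 \<eta>2) 1 / 2"
  have \<eta>: "\<eta> > 0" "\<eta> \<le> 1/2" "2 * \<eta> \<le> \<eta>1" "2 * \<eta> \<le> \<eta>2"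
    using \<eta>1(1) \<eta>2(1) unfolding \<eta>_def by auto
  have straddle: "t n j < v \<and> v \<le> t n (Suc j)"
    if j: "j < k n" "\<bar>t n j - v\<bar> < \<eta>" "c \<le> dist (x (t n (Suc j))) (x (t n j))"
      and gap: "t n (Suc j) - t n j < \<eta>" for n j
  proof (rule ccontr)
    have "t n j < t n (Suc j)"
      using ps j(1) unfolding partition_seq_def by blast
    moreover assume "\<not> (t n j < v \<and> v \<le> t n (Suc j))"
    ultimately consider "v \<le> t n j" | "t n (Suc j) < v"
      by linarith
    then show False
    proof cases
      case 1
      then have "dist (x (t n (Suc j))) (x v) < c/2" "dist (x (t n j)) (x v) < c/2"
        using \<eta>1(2) \<eta> j(2) gap \<open>t n j < t n (Suc j)\<close> by (simp_all add: abs_less_iff)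
      then show False
        using j(3) dist_triangle2[of "x (t n (Suc j))" "x (t n j)" "x v"] by linarith
    next
      case 2
      then have "dist (x (t n (Suc j))) l < c/2" "dist (x (t n j)) l < c/2"
        using \<eta>2(2) \<eta> j(2) \<open>t n j < t n (Suc j)\<close> by (simp_all add: abs_less_iff)
      then show False
        using j(3) dist_triangle2[of "x (t n (Suc j))" "x (t n j)" l] by linarith
    qed
  qed
  have "eventually (\<lambda>n. \<forall>j<k n. t n j \<le> v + 1 \<longrightarrow> t n (Suc j) - t n j < \<eta>) sequentially"
    by (rule partition_mesh_eventually_less[OF ps \<eta>(1)])
  moreover have "t n j \<le> v + 1" if "\<bar>t n j - v\<bar> < \<eta>" for n j
    using that \<eta>(2) by (simp add: abs_less_iff)
  ultimately show ?thesis
    using straddle by (intro that[OF \<eta>(1)]) (auto elim!: eventually_mono)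
qed

lemma time_change_left_above_finite:
  fixes Z :: "real set"
  assumes \<mu>: "\<mu> \<in> time_changes" and v: "0 < v" and Z: "finite Z" and "\<eta> > 0"
  obtains s where "0 < s" "v - \<eta> < s" "s < v" "\<And>z. z \<in> Z \<Longrightarrow> z < \<mu> v \<Longrightarrow> z < \<mu> s"
proof -
  define y where "y = \<mu> v"
  define m where "m = Max (insert (y - 1) {z \<in> Z. z < y})"
  have "m < y"
    unfolding m_def using Z by (subst Max_less_iff) auto
  have below_m: "z \<le> m" if "z \<in> Z" "z < y" for z
    unfolding m_def using Z that by (intro Max_ge) auto
  have "(\<mu> \<longlongrightarrow> y) (at_left v)"
    using time_change_isCont[OF \<mu> v] unfolding isCont_def y_def
    by (rule tendsto_mono[rotated]) (simp add: at_le)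
  then obtain \<eta>' where "\<eta>' > 0" and \<eta>': "\<And>u. v - \<eta>' < u \<Longrightarrow> u < v \<Longrightarrow> dist (\<mu> u) y < y - m"
    using at_left_tendsto_dist_less[of \<mu> y v "y - m"] \<open>m < y\<close> by auto
  define s where "s = v - min (min \<eta> \<eta>') v / 2"
  have s: "0 < s" "v - \<eta> < s" "v - \<eta>' < s" "s < v"
    unfolding s_def using \<open>\<eta> > 0\<close> \<open>\<eta>' > 0\<close> v by auto
  have "m < \<mu> s"
    using \<eta>'[OF s(3,4)] by (simp add: dist_real_def abs_less_iff)
  with below_m have "z < \<mu> s" if "z \<in> Z" "z < \<mu> v" for z
    using that unfolding y_def by force
  with s that show ?thesis
    by blast
qed

text \<open>Compare \<open>\<mu> v\<close> with \<open>\<mu> s\<close> for \<open>s\<close> slightly left of \<open>v\<close>, chosen such that no step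
  time lies in \<open>(\<mu> s, \<mu> v)\<close>: the increment of \<open>g\<close> between them is the step at \<open>\<mu> v\<close>,
  and it inherits the jump of \<open>F\<close> at \<open>v\<close>.\<close>
lemma step_function_jump_at_time_change:
  fixes \<tau> P :: "nat \<Rightarrow> real" and F g :: "real \<Rightarrow> real"
  assumes inj: "\<And>i j. i < K \<Longrightarrow> j < K \<Longrightarrow> \<tau> i = \<tau> j \<Longrightarrow> i = j"
    and g: "\<And>s. g s = (\<Sum>i\<in>{i. i < K \<and> \<tau> i \<le> s}. P i)"
    and \<mu>: "\<mu> \<in> time_changes" and v: "0 < v"
    and F: "(F \<longlongrightarrow> l) (at_left v)" "4 * e < \<bar>F v - l\<bar>" and e: "0 < e"
    and fit: "\<forall>s\<in>{0..v}. \<bar>g (\<mu> s) - F s\<bar> \<le> e"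
  shows "\<exists>j<K. \<tau> j = \<mu> v \<and> e < \<bar>P j\<bar>"
proof -
  obtain \<eta> where "\<eta> > 0" and \<eta>: "\<And>u. v - \<eta> < u \<Longrightarrow> u < v \<Longrightarrow> dist (F u) l < e"
    using at_left_tendsto_dist_less[OF F(1) e] by auto
  obtain s where s: "0 < s" "v - \<eta> < s" "s < v"
    and gap: "\<And>z. z \<in> \<tau> ` {..<K} \<Longrightarrow> z < \<mu> v \<Longrightarrow> z < \<mu> s"
    using time_change_left_above_finite[OF \<mu> v _ \<open>\<eta> > 0\<close>, of "\<tau> ` {..<K}"] by auto
  have "\<mu> s < \<mu> v"
    using time_change_less[OF \<mu>, of s v] s by simp
  define J where "J = {i. i < K \<and> \<tau> i = \<mu> v}"
  have sub: "{i. i < K \<and> \<tau> i \<le> \<mu> s} \<subseteq> {i. i < K \<and> \<tau> i \<le> \<mu> v}"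
    using \<open>\<mu> s < \<mu> v\<close> by auto
  have "{i. i < K \<and> \<tau> i \<le> \<mu> v} - {i. i < K \<and> \<tau> i \<le> \<mu> s} = J"
    using gap \<open>\<mu> s < \<mu> v\<close> unfolding J_def by fastforce
  moreover have "g (\<mu> v) - g (\<mu> s) = sum P ({i. i < K \<and> \<tau> i \<le> \<mu> v} - {i. i < K \<and> \<tau> i \<le> \<mu> s})"
    unfolding g by (rule sum_diff[symmetric, OF _ sub]) simp
  ultimately have jump: "g (\<mu> v) - g (\<mu> s) = sum P J"
    by simp
  have "\<bar>g (\<mu> v) - F v\<bar> \<le> e" "\<bar>g (\<mu> s) - F s\<bar> \<le> e"
    using fit v s(1,3) by auto
  moreover have "\<bar>F s - l\<bar> < e"
    using \<eta>[OF s(2,3)] by (simp add: dist_real_def)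
  ultimately have "e < \<bar>sum P J\<bar>"
    unfolding jump[symmetric] using F(2) by linarith
  then obtain j where "j \<in> J"
    using e by fastforce
  then have "J = {j}" "j < K" "\<tau> j = \<mu> v"
    using inj unfolding J_def by auto
  then show ?thesis
    using \<open>e < \<bar>sum P J\<bar>\<close> by auto
qed

lemma qv_matrix_nth:
  "qv_matrix t k x n s $ a $ b = (\<Sum>i\<in>{i. i < k n \<and> t n i \<le> s}.
      (x (t n (Suc i)) - x (t n i)) $ a * (x (t n (Suc i)) - x (t n i)) $ b)"
  unfolding qv_matrix_def by simp

lemma sqrt_le_norm_if_nth_mult_gt:
  fixes u :: "real ^ 'n"
  assumes "e < \<bar>u $ a * u $ b\<bar>"
  shows "sqrt e \<le> norm u"
proof -
  have "\<bar>u $ a * u $ b\<bar> \<le> norm u * norm u"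
    unfolding abs_mult by (intro mult_mono component_le_norm_cart) auto
  then have "e \<le> (norm u)\<^sup>2"
    using assms by (simp add: power2_eq_square)
  then show ?thesis
    by (simp add: real_le_lsqrt)
qed

text \<open>The step at \<open>\<mu> n v\<close> is a large increment of \<open>x\<close>, and large increments near \<open>v\<close>
  straddle \<open>v\<close>.\<close>
lemma qv_matrix_limit_jump_straddled:
  fixes x :: "real \<Rightarrow> real ^ 'm" and \<mu> :: "nat \<Rightarrow> real \<Rightarrow> real"
  assumes ps: "partition_seq t k" and x: "cadlag x"
    and \<mu>: "\<And>n. \<mu> n \<in> time_changes" and \<mu>v: "(\<lambda>n. \<mu> n v) \<longlonglongrightarrow> v" and v: "0 < v"
    and F: "(F \<longlongrightarrow> l) (at_left v)" "4 * e < \<bar>F v - l\<bar>" and e: "0 < e"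
    and fit: "eventually (\<lambda>n. \<forall>s\<in>{0..v}. \<bar>qv_matrix t k x n (\<mu> n s) $ a $ b - F s\<bar> \<le> e) sequentially"
  shows "eventually (\<lambda>n. \<exists>j<k n. t n j = \<mu> n v \<and> t n j < v \<and> v \<le> t n (Suc j)) sequentially"
proof -
  define \<Delta> where "\<Delta> n i = x (t n (Suc i)) - x (t n i)" for n i
  obtain \<eta> where "\<eta> > 0" and straddle: "eventually (\<lambda>n. \<forall>j<k n. \<bar>t n j - v\<bar> < \<eta> \<longrightarrow>
      sqrt e \<le> dist (x (t n (Suc j))) (x (t n j)) \<longrightarrow> t n j < v \<and> v \<le> t n (Suc j)) sequentially"
    using partition_large_increment_straddles[OF ps x v, of "sqrt e"] e by auto
  have "eventually (\<lambda>n. \<bar>\<mu> n v - v\<bar> < \<eta>) sequentially"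
    using tendstoD[OF \<mu>v \<open>\<eta> > 0\<close>] by (simp add: dist_real_def)
  moreover have "eventually (\<lambda>n. \<exists>j<k n. t n j = \<mu> n v \<and> e < \<bar>\<Delta> n j $ a * \<Delta> n j $ b\<bar>) sequentially"
    using fit
  proof eventually_elim
    case (elim n)
    have inj: "i = j" if "i < k n" "j < k n" "t n i = t n j" for i j
      using partition_point_inj[OF ps, of i n j] that by simp
    have qv: "qv_matrix t k x n s $ a $ b =
        (\<Sum>i\<in>{i. i < k n \<and> t n i \<le> s}. \<Delta> n i $ a * \<Delta> n i $ b)" for s
      unfolding qv_matrix_nth \<Delta>_def ..
    show ?case
      by (rule step_function_jump_at_time_change[where g = "\<lambda>s. qv_matrix t k x n s $ a $ b"
            and P = "\<lambda>i. \<Delta> n i $ a * \<Delta> n i $ b", OF inj qv \<mu> v F e elim])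
  qed
  ultimately show ?thesis
    using straddle
  proof eventually_elim
    case (elim n)
    then obtain j where j: "j < k n" "t n j = \<mu> n v" "e < \<bar>\<Delta> n j $ a * \<Delta> n j $ b\<bar>"
      by blast
    then have "sqrt e \<le> dist (x (t n (Suc j))) (x (t n j))"
      using sqrt_le_norm_if_nth_mult_gt[OF j(3)] by (simp add: \<Delta>_def dist_norm)
    with elim j show ?case
      by auto
  qed
qed

lemma qv_matrix_time_changes_agree_on_jumps:
  fixes x :: "real \<Rightarrow> real ^ 'm" and F :: "'m \<times> 'm \<Rightarrow> real \<Rightarrow> real"
    and \<mu> :: "'m \<times> 'm \<Rightarrow> nat \<Rightarrow> real \<Rightarrow> real"
  assumes ps: "partition_seq t k" and x: "cadlag x"
    and \<mu>: "\<And>ab n. \<mu> ab n \<in> time_changes"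
    and \<mu>_conv: "\<And>ab T e. T > 0 \<Longrightarrow> e > 0 \<Longrightarrow>
        eventually (\<lambda>n. \<forall>s\<in>{0..T}. \<bar>\<mu> ab n s - s\<bar> \<le> e) sequentially"
    and fit: "\<And>ab T e. T > 0 \<Longrightarrow> e > 0 \<Longrightarrow> eventually (\<lambda>n. \<forall>s\<in>{0..T}.
        dist (qv_matrix t k x n (\<mu> ab n s) $ fst ab $ snd ab) (F ab s) \<le> e) sequentially"
    and V: "\<And>ab. finite (V ab)"
      "\<And>ab. \<forall>v\<in>V ab. 0 < v \<and> (\<exists>l. (F ab \<longlongrightarrow> l) (at_left v) \<and> \<epsilon> < dist (F ab v) l)"
    and \<epsilon>: "\<epsilon> > 0"
  shows "eventually (\<lambda>n. \<forall>ab ab' v. v \<in> V ab \<longrightarrow> v \<in> V ab' \<longrightarrow> \<mu> ab n v = \<mu> ab' n v) sequentially"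
proof -
  have "eventually (\<lambda>n. \<forall>ab. \<forall>v\<in>V ab.
      \<exists>j<k n. t n j = \<mu> ab n v \<and> t n j < v \<and> v \<le> t n (Suc j)) sequentially"
  proof (intro eventually_all_finite eventually_ball_finite V(1) ballI)
    fix ab v
    assume "v \<in> V ab"
    then obtain l where "0 < v" and lim: "(F ab \<longlongrightarrow> l) (at_left v)"
      and jump: "4 * (\<epsilon> / 4) < \<bar>F ab v - l\<bar>"
      using V(2)[of ab] by (auto simp: dist_real_def)
    have "(\<lambda>n. \<mu> ab n v) \<longlonglongrightarrow> v"
      using \<mu>_conv[OF \<open>0 < v\<close>] \<open>0 < v\<close> by (intro tendsto_time_change_at[of v]) auto
    moreover have "eventually (\<lambda>n. \<forall>s\<in>{0..v}.
        \<bar>qv_matrix t k x n (\<mu> ab n s) $ fst ab $ snd ab - F ab s\<bar> \<le> \<epsilon> / 4) sequentially"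
      using fit[OF \<open>0 < v\<close>, of "\<epsilon> / 4" ab] \<epsilon> by (simp add: dist_real_def)
    ultimately show "eventually (\<lambda>n. \<exists>j<k n. t n j = \<mu> ab n v \<and> t n j < v \<and> v \<le> t n (Suc j))
        sequentially"
      using \<epsilon> by (intro qv_matrix_limit_jump_straddled[OF ps x \<mu> _ \<open>0 < v\<close> lim jump]) auto
  qed
  then show ?thesis
    by (rule eventually_mono) (metis partition_straddle_unique[OF ps])
qed

lemma qv_matrix_skorokhod_tendsto_of_entries:
  fixes x :: "real \<Rightarrow> real ^ 'm" and F :: "'m \<times> 'm \<Rightarrow> real \<Rightarrow> real"
  assumes ps: "partition_seq t k" and x: "cadlag x"
    and F: "\<And>ab. skorokhod_tendsto (\<lambda>n s. qv_matrix t k x n s $ fst ab $ snd ab) (F ab)"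
  shows "skorokhod_tendsto (qv_matrix t k x) (\<lambda>s. \<chi> a b. F (a, b) s)"
proof -
  define good where "good ab lam \<longleftrightarrow> (\<forall>n. lam n \<in> time_changes) \<and>
      (\<forall>T>0. \<forall>e>0. eventually (\<lambda>n. \<forall>s\<in>{0..T}. \<bar>lam n s - s\<bar> \<le> e) sequentially) \<and>
      (\<forall>T>0. \<forall>e>0. eventually (\<lambda>n. \<forall>s\<in>{0..T}.
        dist (qv_matrix t k x n (lam n s) $ fst ab $ snd ab) (F ab s) \<le> e) sequentially)"
    for ab and lam :: "nat \<Rightarrow> real \<Rightarrow> real"
  define \<mu> where "\<mu> ab = (SOME lam. good ab lam)" for ab
  have "\<exists>lam. good ab lam" for ab
    using F[of ab] unfolding skorokhod_tendsto_def good_def by blast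
  then have "good ab (\<mu> ab)" for ab
    unfolding \<mu>_def by (rule someI_ex)
  then have \<mu>: "\<And>ab n. \<mu> ab n \<in> time_changes"
    and \<mu>_conv: "\<And>ab T e. T > 0 \<Longrightarrow> e > 0 \<Longrightarrow>
        eventually (\<lambda>n. \<forall>s\<in>{0..T}. \<bar>\<mu> ab n s - s\<bar> \<le> e) sequentially"
    and fit: "\<And>ab T e. T > 0 \<Longrightarrow> e > 0 \<Longrightarrow> eventually (\<lambda>n. \<forall>s\<in>{0..T}.
        dist (qv_matrix t k x n (\<mu> ab n s) $ fst ab $ snd ab) (F ab s) \<le> e) sequentially"
    unfolding good_def by blast+
  have "cadlag (\<lambda>s. qv_matrix t k x n s $ a $ b)" for n a b
    using F[of "(a, b)"] unfolding skorokhod_tendsto_def by auto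
  then have "cadlag (qv_matrix t k x n)" for n
    by (simp add: cadlag_vecI)
  moreover have "cadlag (F ab)" for ab
    using F[of ab] unfolding skorokhod_tendsto_def by blast
  ultimately show ?thesis
    using qv_matrix_time_changes_agree_on_jumps[OF ps x \<mu> \<mu>_conv fit]
    by (intro skorokhod_tendsto_matrix_of_entries[OF _ _ \<mu> \<mu>_conv fit]) blast+
qed

theorem proposition3p5:
  fixes t :: "nat \<Rightarrow> nat \<Rightarrow> real" and k :: "nat \<Rightarrow> nat" and x :: "real \<Rightarrow> real^'m"
  assumes "partition_seq t k"
    and "cadlag x"
  shows "skorokhod_convergent (qv_matrix t k x) \<longleftrightarrow>
         (\<forall>a b. skorokhod_convergent (\<lambda>n s. qv_matrix t k x n s $ a $ b))"
proof
  assume "skorokhod_convergent (qv_matrix t k x)"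
  then obtain X where "skorokhod_tendsto (qv_matrix t k x) X"
    unfolding skorokhod_convergent_def by blast
  then have "skorokhod_tendsto (\<lambda>n s. qv_matrix t k x n s $ a $ b) (\<lambda>s. X s $ a $ b)" for a b
    by (intro skorokhod_tendsto_vec_nth[where xs = "\<lambda>n s. qv_matrix t k x n s $ a"])
      (rule skorokhod_tendsto_vec_nth)
  then show "\<forall>a b. skorokhod_convergent (\<lambda>n s. qv_matrix t k x n s $ a $ b)"
    unfolding skorokhod_convergent_def by blast
next
  assume "\<forall>a b. skorokhod_convergent (\<lambda>n s. qv_matrix t k x n s $ a $ b)"
  then have "\<forall>ab. \<exists>F. skorokhod_tendsto (\<lambda>n s. qv_matrix t k x n s $ fst ab $ snd ab) F"
    unfolding skorokhod_convergent_def by simp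
  then have "\<exists>F. \<forall>ab. skorokhod_tendsto (\<lambda>n s. qv_matrix t k x n s $ fst ab $ snd ab) (F ab)"
    by (rule choice)
  then obtain F where "\<And>ab. skorokhod_tendsto (\<lambda>n s. qv_matrix t k x n s $ fst ab $ snd ab) (F ab)"
    by blast
  then show "skorokhod_convergent (qv_matrix t k x)"
    unfolding skorokhod_convergent_def using qv_matrix_skorokhod_tendsto_of_entries assms by blast
qed

end
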